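(* Let $\varphi(u,v)$ be a (twice continuously differentiable) solution of the equation $$\varphi_{uu}+\varphi_{vv}+\frac{1}{v}\varphi_v=0$$ on an open set $D\subset\{(u,v)\in\mathbb{R}^2: v\neq 0\}$. Then for any pair of conjugate harmonic functions $u(x,y),v(x,y)$ on an open set $\Omega\subset\mathbb{R}^2$ (i.e. $u_x=v_y$, $u_y=-v_x$) with $(u(x,y),v(x,y))\in D$ for $(x,y)\in\Omega$, the function $\psi(x,y)=\varphi(u(x,y),v(x,y))$ satisfies $$(v\,\psi_x)_x+(v\,\psi_y)_y=0\quad\text{on }\Omega .$$ *)

theory Defs
  imports "HOL-Analysis.Analysis"
begin

definition pdx :: "(real \<times> real \<Rightarrow> real) \<Rightarrow> real \<times> real \<Rightarrow> real" where
  "pdx f p = deriv (\<lambda>t. f (t, snd p)) (fst p)"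

definition pdy :: "(real \<times> real \<Rightarrow> real) \<Rightarrow> real \<times> real \<Rightarrow> real" where
  "pdy f p = deriv (\<lambda>s. f (fst p, s)) (snd p)"

end

theory Submission
  imports Defs
begin

text \<open>Writing \<open>\<psi>\<^sub>x = \<phi>\<^sub>u u\<^sub>x + \<phi>\<^sub>v v\<^sub>x\<close> and \<open>\<psi>\<^sub>y = \<phi>\<^sub>u u\<^sub>y + \<phi>\<^sub>v v\<^sub>y\<close> and expanding
  \<open>(v \<psi>\<^sub>x)\<^sub>x + (v \<psi>\<^sub>y)\<^sub>y\<close> by the chain and product rules, the Cauchy-Riemann equations give
  \<open>u\<^sub>x v\<^sub>x + u\<^sub>y v\<^sub>y = 0\<close> and \<open>u\<^sub>x\<^sup>2 + u\<^sub>y\<^sup>2 = v\<^sub>x\<^sup>2 + v\<^sub>y\<^sup>2\<close>, so all mixed terms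
  cancel, the Laplacians of \<open>u\<close> and \<open>v\<close> vanish, and what remains is
  \<open>(v\<^sub>x\<^sup>2 + v\<^sub>y\<^sup>2) (v (\<phi>\<^sub>u\<^sub>u + \<phi>\<^sub>v\<^sub>v) + \<phi>\<^sub>v)\<close>, which is zero by the equation for \<open>\<phi>\<close>.\<close>

abbreviation has_partials ::
    "(real \<times> real \<Rightarrow> real) \<Rightarrow> real \<Rightarrow> real \<Rightarrow> real \<times> real \<Rightarrow> bool" where
  "has_partials f fx fy q \<equiv> (f has_derivative (\<lambda>h. fx * fst h + fy * snd h)) (at q)"

lemma has_partials_compose:
  fixes g u v :: "real \<times> real \<Rightarrow> real"
  assumes "has_partials g a b (u q, v q)"
    and "has_partials u ux uy q" and "has_partials v vx vy q"
  shows "has_partials (\<lambda>q. g (u q, v q)) (a * ux + b * vx) (a * uy + b * vy) q"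
  using has_derivative_compose[OF has_derivative_Pair[OF assms(2,3)] assms(1)]
  by (rule has_derivative_eq_rhs) (auto simp: algebra_simps fun_eq_iff)

lemma has_partials_mult:
  fixes f g :: "real \<times> real \<Rightarrow> real"
  assumes "has_partials f fx fy q" and "has_partials g gx gy q"
  shows "has_partials (\<lambda>q. f q * g q) (f q * gx + fx * g q) (f q * gy + fy * g q) q"
  using has_derivative_mult[OF assms]
  by (rule has_derivative_eq_rhs) (auto simp: algebra_simps fun_eq_iff)

lemma has_partials_add:
  fixes f g :: "real \<times> real \<Rightarrow> real"
  assumes "has_partials f fx fy q" and "has_partials g gx gy q"
  shows "has_partials (\<lambda>q. f q + g q) (fx + gx) (fy + gy) q"
  using has_derivative_add[OF assms]
  by (rule has_derivative_eq_rhs) (auto simp: algebra_simps fun_eq_iff)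

lemma has_real_derivative_fst_slice:
  fixes f g :: "real \<times> real \<Rightarrow> real"
  assumes "has_partials f X Y (a, b)"
    and "open S" "(a, b) \<in> S" "\<forall>q\<in>S. g q = f q"
  shows "((\<lambda>t. g (t, b)) has_real_derivative X) (at a)"
proof -
  have "((\<lambda>t. (t, b)) has_derivative (\<lambda>h. (h, 0))) (at a)"
    by (auto intro!: derivative_eq_intros)
  from has_derivative_compose[OF this assms(1)]
  have "((\<lambda>t. f (t, b)) has_real_derivative X) (at a)"
    unfolding has_field_derivative_def
    by (rule has_derivative_eq_rhs) (auto simp: fun_eq_iff)
  moreover have "open ((\<lambda>t. (t, b)) -` S)"
    using \<open>open S\<close> by (rule open_vimage) (auto intro!: continuous_intros)
  ultimately show ?thesis
    by (rule has_field_derivative_transform_within_open) (use assms(3,4) in auto)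
qed

lemma has_real_derivative_snd_slice:
  fixes f g :: "real \<times> real \<Rightarrow> real"
  assumes "has_partials f X Y (a, b)"
    and "open S" "(a, b) \<in> S" "\<forall>q\<in>S. g q = f q"
  shows "((\<lambda>t. g (a, t)) has_real_derivative Y) (at b)"
proof -
  have "((\<lambda>t. (a, t)) has_derivative (\<lambda>h. (0, h))) (at b)"
    by (auto intro!: derivative_eq_intros)
  from has_derivative_compose[OF this assms(1)]
  have "((\<lambda>t. f (a, t)) has_real_derivative Y) (at b)"
    unfolding has_field_derivative_def
    by (rule has_derivative_eq_rhs) (auto simp: fun_eq_iff)
  moreover have "open ((\<lambda>t. (a, t)) -` S)"
    using \<open>open S\<close> by (rule open_vimage) (auto intro!: continuous_intros)
  ultimately show ?thesis
    by (rule has_field_derivative_transform_within_open) (use assms(3,4) in auto)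
qed

lemma pdx_eq_partial: "has_partials f X Y q \<Longrightarrow> pdx f q = X"
  unfolding pdx_def
  by (rule DERIV_imp_deriv, rule has_real_derivative_fst_slice[where S = UNIV]) auto

lemma pdy_eq_partial: "has_partials f X Y q \<Longrightarrow> pdy f q = Y"
  unfolding pdy_def
  by (rule DERIV_imp_deriv, rule has_real_derivative_snd_slice[where S = UNIV]) auto

lemma has_real_derivative_weighted_pdx:
  fixes w f :: "real \<times> real \<Rightarrow> real"
  assumes "open S" "(a, b) \<in> S" "\<forall>q\<in>S. has_partials f (fx q) (fy q) q"
    and "has_partials (\<lambda>q. w q * fx q) X Y (a, b)"
  shows "((\<lambda>t. w (t, b) * pdx f (t, b)) has_real_derivative X) (at a)"
  using assms(4,1,2) by (rule has_real_derivative_fst_slice) (use assms(3) pdx_eq_partial in auto)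

lemma has_real_derivative_weighted_pdy:
  fixes w f :: "real \<times> real \<Rightarrow> real"
  assumes "open S" "(a, b) \<in> S" "\<forall>q\<in>S. has_partials f (fx q) (fy q) q"
    and "has_partials (\<lambda>q. w q * fy q) X Y (a, b)"
  shows "((\<lambda>t. w (a, t) * pdy f (a, t)) has_real_derivative Y) (at b)"
  using assms(4,1,2) by (rule has_real_derivative_snd_slice) (use assms(3) pdy_eq_partial in auto)

text \<open>The left-hand side is \<open>(v \<psi>\<^sub>x)\<^sub>x + (v \<psi>\<^sub>y)\<^sub>y\<close> in exactly the shape produced by
  \<open>has_partials_compose\<close>, \<open>has_partials_mult\<close> and \<open>has_partials_add\<close>.\<close>

lemma divergence_identity_conjugate_harmonic:
  fixes V :: real
  assumes "uxx + uyy = 0" "vxx + vyy = 0" "ux = vy" "uy = - vx"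
  shows "(V * ((pu * uxx + (puu * ux + puv * vx) * ux) + (pv * vxx + (pvu * ux + pvv * vx) * vx))
            + vx * (pu * ux + pv * vx))
       + (V * ((pu * uyy + (puu * uy + puv * vy) * uy) + (pv * vyy + (pvu * uy + pvv * vy) * vy))
            + vy * (pu * uy + pv * vy))
       = (vx\<^sup>2 + vy\<^sup>2) * (V * (puu + pvv) + pv)"
proof -
  have "uyy = - uxx" "vyy = - vxx" using assms(1,2) by linarith+
  then show ?thesis using assms(3,4) by (simp add: power2_eq_square algebra_simps)
qed

theorem lemma1:
  fixes \<phi> \<phi>u \<phi>v \<phi>uu \<phi>uv \<phi>vu \<phi>vv :: "real \<times> real \<Rightarrow> real"
    and u v ux uy vx vy uxx uxy uyx uyy vxx vxy vyx vyy :: "real \<times> real \<Rightarrow> real"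
    and D \<Omega> :: "(real \<times> real) set"
  assumes D_open: "open D"
    and D_sub: "D \<subseteq> {p. snd p \<noteq> 0}"
    and \<phi>_d1: "\<forall>p\<in>D. (\<phi> has_derivative (\<lambda>h. \<phi>u p * fst h + \<phi>v p * snd h)) (at p)"
    and \<phi>_d2u: "\<forall>p\<in>D. (\<phi>u has_derivative (\<lambda>h. \<phi>uu p * fst h + \<phi>uv p * snd h)) (at p)"
    and \<phi>_d2v: "\<forall>p\<in>D. (\<phi>v has_derivative (\<lambda>h. \<phi>vu p * fst h + \<phi>vv p * snd h)) (at p)"
    and \<phi>_cont: "continuous_on D \<phi>uu" "continuous_on D \<phi>uv"
                 "continuous_on D \<phi>vu" "continuous_on D \<phi>vv"
    and \<phi>_eq: "\<forall>p\<in>D. \<phi>uu p + \<phi>vv p + (1 / snd p) * \<phi>v p = 0"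
    and \<Omega>_open: "open \<Omega>"
    and u_d1: "\<forall>p\<in>\<Omega>. (u has_derivative (\<lambda>h. ux p * fst h + uy p * snd h)) (at p)"
    and v_d1: "\<forall>p\<in>\<Omega>. (v has_derivative (\<lambda>h. vx p * fst h + vy p * snd h)) (at p)"
    and ux_d: "\<forall>p\<in>\<Omega>. (ux has_derivative (\<lambda>h. uxx p * fst h + uxy p * snd h)) (at p)"
    and uy_d: "\<forall>p\<in>\<Omega>. (uy has_derivative (\<lambda>h. uyx p * fst h + uyy p * snd h)) (at p)"
    and vx_d: "\<forall>p\<in>\<Omega>. (vx has_derivative (\<lambda>h. vxx p * fst h + vxy p * snd h)) (at p)"
    and vy_d: "\<forall>p\<in>\<Omega>. (vy has_derivative (\<lambda>h. vyx p * fst h + vyy p * snd h)) (at p)"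
    and uv_cont: "continuous_on \<Omega> uxx" "continuous_on \<Omega> uxy" "continuous_on \<Omega> uyx"
                 "continuous_on \<Omega> uyy" "continuous_on \<Omega> vxx" "continuous_on \<Omega> vxy"
                 "continuous_on \<Omega> vyx" "continuous_on \<Omega> vyy"
    and u_harm: "\<forall>p\<in>\<Omega>. uxx p + uyy p = 0"
    and v_harm: "\<forall>p\<in>\<Omega>. vxx p + vyy p = 0"
    and CR1: "\<forall>p\<in>\<Omega>. ux p = vy p"
    and CR2: "\<forall>p\<in>\<Omega>. uy p = - vx p"
    and maps: "\<forall>p\<in>\<Omega>. (u p, v p) \<in> D"
  shows "\<forall>x y. (x, y) \<in> \<Omega> \<longrightarrow>
           (let \<psi> = (\<lambda>q. \<phi> (u q, v q)) in
            \<exists>A B. ((\<lambda>t. v (t, y) * pdx \<psi> (t, y)) has_real_derivative A) (at x)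
                \<and> ((\<lambda>s. v (x, s) * pdy \<psi> (x, s)) has_real_derivative B) (at y)
                \<and> A + B = 0)"
proof (intro allI impI)
  fix x y assume p: "(x, y) \<in> \<Omega>"
  define \<psi> where "\<psi> q = \<phi> (u q, v q)" for q
  let ?P = "(u (x, y), v (x, y))"
  have P: "?P \<in> D" using maps p by blast
  have pde: "v (x, y) * (\<phi>uu ?P + \<phi>vv ?P) + \<phi>v ?P = 0"
    using \<phi>_eq D_sub P by (fastforce simp: field_simps)
  have \<psi>_partials: "\<forall>q\<in>\<Omega>. has_partials \<psi> (\<phi>u (u q, v q) * ux q + \<phi>v (u q, v q) * vx q)
      (\<phi>u (u q, v q) * uy q + \<phi>v (u q, v q) * vy q) q"
    unfolding \<psi>_def using maps u_d1 v_d1 \<phi>_d1 by (blast intro: has_partials_compose)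
  note \<phi>u_comp = has_partials_compose[OF \<phi>_d2u[rule_format, OF P]
      u_d1[rule_format, OF p] v_d1[rule_format, OF p]]
  note \<phi>v_comp = has_partials_compose[OF \<phi>_d2v[rule_format, OF P]
      u_d1[rule_format, OF p] v_d1[rule_format, OF p]]
  note dx = has_real_derivative_weighted_pdx[OF \<Omega>_open p \<psi>_partials
      has_partials_mult[OF v_d1[rule_format, OF p]
        has_partials_add[OF has_partials_mult[OF \<phi>u_comp ux_d[rule_format, OF p]]
                            has_partials_mult[OF \<phi>v_comp vx_d[rule_format, OF p]]]]]
  note dy = has_real_derivative_weighted_pdy[OF \<Omega>_open p \<psi>_partials
      has_partials_mult[OF v_d1[rule_format, OF p]
        has_partials_add[OF has_partials_mult[OF \<phi>u_comp uy_d[rule_format, OF p]]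
                            has_partials_mult[OF \<phi>v_comp vy_d[rule_format, OF p]]]]]
  show "let \<psi> = (\<lambda>q. \<phi> (u q, v q)) in
            \<exists>A B. ((\<lambda>t. v (t, y) * pdx \<psi> (t, y)) has_real_derivative A) (at x)
                \<and> ((\<lambda>s. v (x, s) * pdy \<psi> (x, s)) has_real_derivative B) (at y)
                \<and> A + B = 0"
    unfolding Let_def \<psi>_def[abs_def, symmetric]
    by (intro exI, rule conjI[OF dx conjI[OF dy]],
        rule trans[OF divergence_identity_conjugate_harmonic[OF u_harm[rule_format, OF p]
          v_harm[rule_format, OF p] CR1[rule_format, OF p] CR2[rule_format, OF p]]])
      (simp add: pde)
qed

end
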